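(* Let $\mathbb H=\mathbb R$ or $\mathbb C$, $\mathbf A\in\mathbb H^{m\times d}$, $\mathbf b\in\mathbb H^m$. Then neither $\mathbf M_{\mathbf A,\mathbf b}$ nor $\mathbf M^2_{\mathbf A,\mathbf b}$ is bi-Lipschitz on $\mathbb H^d$ (with respect to Euclidean norms).
   Context: For $\mathbf u,\mathbf v\in\mathbb H^d$, $\langle\mathbf u,\mathbf v\rangle=\sum_i\overline{u_i}v_i$. With $\mathbf A=(\mathbf a_1,\ldots,\mathbf a_m)^\top$ and $\mathbf b=(b_1,\ldots,b_m)^\top$, $\mathbf M_{\mathbf A,\mathbf b}(\mathbf x)=(|\langle\mathbf a_1,\mathbf x\rangle+b_1|,\ldots,|\langle\mathbf a_m,\mathbf x\rangle+b_m|)$ and $\mathbf M^2_{\mathbf A,\mathbf b}(\mathbf x)=(|\langle\mathbf a_1,\mathbf x\rangle+b_1|^2,\ldots,|\langle\mathbf a_m,\mathbf x\rangle+b_m|^2)$. A map $F$ is bi-Lipschitz on $\mathbb H^d$ if there are constants $0<c\le C$ with $c\|\mathbf x-\mathbf y\|\le\|F(\mathbf x)-F(\mathbf y)\|\le C\|\mathbf x-\mathbf y\|$ for all $\mathbf x,\mathbf y\in\mathbb H^d$. *)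

theory Defs
  imports "HOL-Analysis.Analysis"
begin

definition rinner :: "real^'d \<Rightarrow> real^'d \<Rightarrow> real" where
  "rinner u v = (\<Sum>i\<in>UNIV. u$i * v$i)"

definition cinner :: "complex^'d \<Rightarrow> complex^'d \<Rightarrow> complex" where
  "cinner u v = (\<Sum>i\<in>UNIV. cnj (u$i) * v$i)"

definition M_real :: "real^'d^'m \<Rightarrow> real^'m \<Rightarrow> real^'d \<Rightarrow> real^'m" where
  "M_real A b x = (\<chi> j. \<bar>rinner (A$j) x + b$j\<bar>)"

definition M2_real :: "real^'d^'m \<Rightarrow> real^'m \<Rightarrow> real^'d \<Rightarrow> real^'m" where
  "M2_real A b x = (\<chi> j. \<bar>rinner (A$j) x + b$j\<bar>^2)"

definition M_complex :: "complex^'d^'m \<Rightarrow> complex^'m \<Rightarrow> complex^'d \<Rightarrow> real^'m" where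
  "M_complex A b x = (\<chi> j. cmod (cinner (A$j) x + b$j))"

definition M2_complex :: "complex^'d^'m \<Rightarrow> complex^'m \<Rightarrow> complex^'d \<Rightarrow> real^'m" where
  "M2_complex A b x = (\<chi> j. (cmod (cinner (A$j) x + b$j))^2)"

definition bi_lipschitz :: "('a::real_normed_vector \<Rightarrow> 'b::real_normed_vector) \<Rightarrow> bool" where
  "bi_lipschitz F \<longleftrightarrow> (\<exists>c C. 0 < c \<and> c \<le> C \<and>
     (\<forall>x y. c * norm (x - y) \<le> norm (F x - F y) \<and> norm (F x - F y) \<le> C * norm (x - y)))"

end

theory Submission
  imports Defs
begin

text \<open>
  Replacing \<open>x\<close> by \<open>-x\<close> changes the \<open>j\<close>-th coordinate of \<open>M\<close> by at most \<open>2|b j|\<close>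
  (reverse triangle inequality), while \<open>x\<close> and \<open>-x\<close> drift arbitrarily far apart: \<open>M\<close> has no
  lower Lipschitz bound. For \<open>M\<^sup>2\<close>, if some row satisfies \<open>\<langle>a j, z\<rangle> \<noteq> 0\<close>, the \<open>j\<close>-th
  coordinate grows quadratically along the line \<open>s z\<close>, so there is no upper Lipschitz bound;
  otherwise \<open>M\<^sup>2\<close> is constant. Only real-linearity of the rows and an inner product on the
  coefficient field are used, so both fields are handled at once.
\<close>

lemma not_bi_lipschitz_if_bounded_odd_part:
  fixes F :: "'a::{real_normed_vector,perfect_space} \<Rightarrow> 'b::real_normed_vector"
  assumes bounded: "\<And>x. norm (F x - F (-x)) \<le> K"
  shows "\<not> bi_lipschitz F"
proof
  assume "bi_lipschitz F"
  then obtain c C where c: "0 < c" and lower: "\<And>x y. c * norm (x - y) \<le> norm (F x - F y)"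
    unfolding bi_lipschitz_def by blast
  have "0 \<le> K" using bounded[of 0] by simp
  then obtain x :: 'a where x: "norm x = (K + 1) / (2 * c)"
    using vector_choose_size[of "(K + 1) / (2 * c)"] c by auto
  have "norm (x - - x) = 2 * norm x"
    by (simp flip: scaleR_2)
  then have "c * norm (x - - x) = K + 1"
    using x c by (simp add: field_simps)
  with lower[of x "-x"] bounded[of x] show False by linarith
qed

lemma not_bi_lipschitz_if_quadratic_growth:
  fixes F :: "'a::real_normed_vector \<Rightarrow> 'b::real_normed_vector"
  assumes growth: "\<And>s::real. \<alpha> * s\<^sup>2 + \<beta> * s \<le> norm (F (s *\<^sub>R z) - F 0)"
    and "\<alpha> > 0"
  shows "\<not> bi_lipschitz F"
proof
  assume "bi_lipschitz F"
  then obtain c C where "0 < c" "c \<le> C" and upper: "\<And>x y. norm (F x - F y) \<le> C * norm (x - y)"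
    unfolding bi_lipschitz_def by blast
  then have "C \<ge> 0" by simp
  define s where "s = (\<bar>\<beta>\<bar> + C * norm z + 1) / \<alpha>"
  have "s > 0"
    unfolding s_def using \<open>\<alpha> > 0\<close> \<open>C \<ge> 0\<close> by (simp add: add_nonneg_pos)
  have \<alpha>s: "\<alpha> * s = \<bar>\<beta>\<bar> + C * norm z + 1"
    unfolding s_def using \<open>\<alpha> > 0\<close> by simp
  have "s * (C * norm z + 1) \<le> s * (\<alpha> * s + \<beta>)"
    using \<alpha>s \<open>s > 0\<close> by (intro mult_left_mono) auto
  also have "\<dots> = \<alpha> * s\<^sup>2 + \<beta> * s"
    by (simp add: power2_eq_square algebra_simps)
  also have "\<dots> \<le> norm (F (s *\<^sub>R z) - F 0)"
    by (rule growth)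
  also have "\<dots> \<le> C * norm (s *\<^sub>R z - 0)"
    by (rule upper)
  also have "\<dots> = s * (C * norm z)"
    using \<open>s > 0\<close> by simp
  finally show False
    using \<open>s > 0\<close> by (simp add: algebra_simps)
qed

lemma norm_add_minus_norm_neg_add_le: "\<bar>norm (u + b) - norm (- u + b)\<bar> \<le> 2 * norm b"
proof -
  have "norm (- u + b) = norm (u - b)"
    by (metis minus_diff_eq norm_minus_cancel uminus_add_conv_diff)
  moreover have "\<bar>norm (u + b) - norm (u - b)\<bar> \<le> norm ((u + b) - (u - b))"
    by (rule norm_triangle_ineq3)
  moreover have "norm ((u + b) - (u - b)) = 2 * norm b"
    by (simp flip: scaleR_2)
  ultimately show ?thesis by simp
qed

lemma not_bi_lipschitz_norm_affine:
  fixes l :: "'m::finite \<Rightarrow> 'a::{real_normed_vector,perfect_space} \<Rightarrow> 'k::real_normed_vector"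
  assumes "\<And>j. linear (l j)"
  shows "\<not> bi_lipschitz (\<lambda>x. \<chi> j. norm (l j x + b j))"
proof (rule not_bi_lipschitz_if_bounded_odd_part[where K = "\<Sum>j\<in>UNIV. 2 * norm (b j)"])
  fix x
  let ?F = "\<lambda>x. \<chi> j. norm (l j x + b j)"
  have "norm (?F x - ?F (-x)) \<le> (\<Sum>j\<in>UNIV. \<bar>(?F x - ?F (-x)) $ j\<bar>)"
    by (rule norm_le_l1_cart)
  also have "\<dots> \<le> (\<Sum>j\<in>UNIV. 2 * norm (b j))"
    using norm_add_minus_norm_neg_add_le assms by (intro sum_mono) (simp add: linear_neg)
  finally show "norm (?F x - ?F (-x)) \<le> (\<Sum>j\<in>UNIV. 2 * norm (b j))" .
qed

lemma norm_scaleR_add_power2: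
  fixes w b :: "'a::real_inner"
  shows "(norm (s *\<^sub>R w + b))\<^sup>2 = s\<^sup>2 * (norm w)\<^sup>2 + 2 * s * inner w b + (norm b)\<^sup>2"
  unfolding power2_norm_eq_inner
  by (simp add: inner_add_left inner_add_right inner_commute power2_eq_square algebra_simps)

lemma not_bi_lipschitz_norm_affine_squared:
  fixes l :: "'m::finite \<Rightarrow> 'a::{real_normed_vector,perfect_space} \<Rightarrow> 'k::real_inner"
  assumes linear: "\<And>j. linear (l j)"
  shows "\<not> bi_lipschitz (\<lambda>x. \<chi> j. (norm (l j x + b j))\<^sup>2)"
    (is "\<not> bi_lipschitz ?F")
proof (cases "\<forall>j x. l j x = 0")
  case True
  then have "\<And>x. norm (?F x - ?F (-x)) \<le> 0" by simp
  then show ?thesis by (rule not_bi_lipschitz_if_bounded_odd_part)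
next
  case False
  then obtain j z where "l j z \<noteq> 0" by blast
  show ?thesis
  proof (rule not_bi_lipschitz_if_quadratic_growth)
    fix s :: real
    have "s\<^sup>2 * (norm (l j z))\<^sup>2 + s * (2 * inner (l j z) (b j)) = (?F (s *\<^sub>R z) - ?F 0) $ j"
      using linear by (simp add: linear_cmul linear_0 norm_scaleR_add_power2)
    also have "\<dots> \<le> \<bar>(?F (s *\<^sub>R z) - ?F 0) $ j\<bar>" by (rule abs_ge_self)
    also have "\<dots> \<le> norm (?F (s *\<^sub>R z) - ?F 0)" by (rule component_le_norm_cart)
    finally show "(norm (l j z))\<^sup>2 * s\<^sup>2 + 2 * inner (l j z) (b j) * s
        \<le> norm (?F (s *\<^sub>R z) - ?F 0)"
      by (simp add: mult.commute)
  next
    show "(norm (l j z))\<^sup>2 > 0" using \<open>l j z \<noteq> 0\<close> by simp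
  qed
qed

lemma rinner_eq_inner: "rinner a x = inner a x"
  by (simp add: rinner_def inner_vec_def)

lemma linear_rinner: "linear (rinner a)"
  unfolding rinner_eq_inner[abs_def] by (rule bounded_linear.linear[OF bounded_linear_inner_right])

lemma linear_cinner: "linear (cinner a)"
proof (rule linearI)
  show "cinner a (x + y) = cinner a x + cinner a y" for x y
    by (simp add: cinner_def distrib_left sum.distrib)
  show "cinner a (s *\<^sub>R x) = s *\<^sub>R cinner a x" for s x
    unfolding cinner_def vector_scaleR_component
    by (simp add: scaleR_conv_of_real sum_distrib_left algebra_simps)
qed

lemma M_real_eq_norm: "M_real A b = (\<lambda>x. \<chi> j. norm (rinner (A $ j) x + b $ j))"
  by (simp add: M_real_def fun_eq_iff)

lemma M2_real_eq_norm: "M2_real A b = (\<lambda>x. \<chi> j. (norm (rinner (A $ j) x + b $ j))\<^sup>2)"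
  by (simp add: M2_real_def fun_eq_iff)

theorem proposition4p2:
  fixes Ar :: "real^'d^'m" and br :: "real^'m"
    and Ac :: "complex^'d^'m" and bc :: "complex^'m"
  shows "\<not> bi_lipschitz (M_real Ar br) \<and> \<not> bi_lipschitz (M2_real Ar br)
       \<and> \<not> bi_lipschitz (M_complex Ac bc) \<and> \<not> bi_lipschitz (M2_complex Ac bc)"
  using not_bi_lipschitz_norm_affine[OF linear_rinner, of "\<lambda>j. Ar $ j" "\<lambda>j. br $ j"]
    not_bi_lipschitz_norm_affine_squared[OF linear_rinner, of "\<lambda>j. Ar $ j" "\<lambda>j. br $ j"]
    not_bi_lipschitz_norm_affine[OF linear_cinner, of "\<lambda>j. Ac $ j" "\<lambda>j. bc $ j"]
    not_bi_lipschitz_norm_affine_squared[OF linear_cinner, of "\<lambda>j. Ac $ j" "\<lambda>j. bc $ j"]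
  unfolding M_real_eq_norm M2_real_eq_norm M_complex_def M2_complex_def
  by blast

end
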